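(* Let $L$ be an interval locale. If $F$ is a presheaf of monomorphisms on $L_{+}$, then $LF$ is a sheaf of monomorphisms on $L_{+}$. Consequently the associated sheaf functor $L^2:\mathbf{Pre}(L_{+})\to\mathbf{Shv}(L_{+})$ restricts to a functor $\mathbf{Mon}_p(L_{+})\to\mathbf{Mon}(L_{+})$ (which agrees with $L$ on these objects).
   Context: A locale $L$ is a complete lattice in which finite meets distribute over arbitrary joins, with Grothendieck topology: $\{b_j\le a\}$ covers $a$ iff $\bigvee_j b_j=a$; sheaves are presheaves $F$ with $F(a)\to\varprojlim_{b\in R}F(b)$ bijective for all covering sieves $R$. $L$ is an interval if it is totally ordered and densely ordered ($a<b$ implies there is $s$ with $a<s<b$). $i$ is the bottom element of $L$; $L_{+}=L\sqcup\{0\}$ with a new bottom $0<i$. A presheaf of monomorphisms on $L_{+}$ is a functor $F:(L_{+})^{op}\to\mathbf{Set}$ with $F(0)=\ast$ and $F(b)\to F(a)$ injective for all $a\le b$ in $L$; these form $\mathbf{Mon}_p(L_{+})$. A sheaf of monomorphisms is a sheaf with this property; they form $\mathbf{Mon}(L_{+})$. For a presheaf $F$ on $L_{+}$, $LF(a)=\varprojlim_{0<b<a}F(b)$ for $a\in L$, $a\ne i$, $LF(i)=F(i)$, $LF(0)=\ast$. *)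

theory Defs
  imports Main "HOL-Library.Option_ord" "HOL-Library.FuncSet"
begin

(* The locale L is modelled by a type 'a :: complete_linorder (a complete chain;
   chains are automatically frames).  L_+ is the type 'a option, ordered by
   Option_ord: None is the new bottom 0, Some x is x in L, and i = Some bot.
   A presheaf on a poset 'p is a family of sets F a together with restriction
   maps r a b : F b -> F a for a <= b (functoriality is required only on the
   relevant sets). *)

definition is_presheaf :: "('p::order \<Rightarrow> 'v set) \<Rightarrow> ('p \<Rightarrow> 'p \<Rightarrow> 'v \<Rightarrow> 'v) \<Rightarrow> bool" where
  "is_presheaf F r \<longleftrightarrow>
     (\<forall>a b x. a \<le> b \<and> x \<in> F b \<longrightarrow> r a b x \<in> F a) \<and>
     (\<forall>a x. x \<in> F a \<longrightarrow> r a a x = x) \<and>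
     (\<forall>a b c x. a \<le> b \<and> b \<le> c \<and> x \<in> F c \<longrightarrow> r a b (r b c x) = r a c x)"

(* The (set-theoretic) limit of F over a subposet I: compatible families,
   represented as extensional functions on I. *)
definition plim :: "'p::order set \<Rightarrow> ('p \<Rightarrow> 'v set) \<Rightarrow> ('p \<Rightarrow> 'p \<Rightarrow> 'v \<Rightarrow> 'v) \<Rightarrow> ('p \<Rightarrow> 'v) set" where
  "plim I F r = {s. s \<in> extensional I \<and> (\<forall>b\<in>I. s b \<in> F b) \<and>
                    (\<forall>b\<in>I. \<forall>c\<in>I. c \<le> b \<longrightarrow> r c b (s b) = s c)}"

definition is_sieve :: "'p::order \<Rightarrow> 'p set \<Rightarrow> bool" where
  "is_sieve a R \<longleftrightarrow> (\<forall>b\<in>R. b \<le> a) \<and> (\<forall>b\<in>R. \<forall>c. c \<le> b \<longrightarrow> c \<in> R)"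

definition is_sheaf :: "('p::complete_lattice \<Rightarrow> 'v set) \<Rightarrow> ('p \<Rightarrow> 'p \<Rightarrow> 'v \<Rightarrow> 'v) \<Rightarrow> bool" where
  "is_sheaf F r \<longleftrightarrow> is_presheaf F r \<and>
     (\<forall>a R. is_sieve a R \<and> Sup R = a \<longrightarrow>
        bij_betw (\<lambda>x. \<lambda>b\<in>R. r b a x) (F a) (plim R F r))"

definition mono_presheaf :: "('a::complete_linorder option \<Rightarrow> 'v set) \<Rightarrow> ('a option \<Rightarrow> 'a option \<Rightarrow> 'v \<Rightarrow> 'v) \<Rightarrow> bool" where
  "mono_presheaf F r \<longleftrightarrow> is_presheaf F r \<and> (\<exists>u. F None = {u}) \<and>
     (\<forall>a b. a \<le> b \<longrightarrow> inj_on (r (Some a) (Some b)) (F (Some b)))"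

definition mono_sheaf :: "('a::complete_linorder option \<Rightarrow> 'v set) \<Rightarrow> ('a option \<Rightarrow> 'a option \<Rightarrow> 'v \<Rightarrow> 'v) \<Rightarrow> bool" where
  "mono_sheaf F r \<longleftrightarrow> is_sheaf F r \<and> mono_presheaf F r"

(* Elements of LF(i) are Inl x with x in F(i);
   elements of LF(a), a <> i, are Inr s with s a compatible family over
   {b. 0 < b < a}; LF(0) is the one-point set (the limit over the empty poset). *)
definition LF :: "('a::complete_linorder option \<Rightarrow> 'v set) \<Rightarrow> ('a option \<Rightarrow> 'a option \<Rightarrow> 'v \<Rightarrow> 'v)
                   \<Rightarrow> 'a option \<Rightarrow> ('v + ('a option \<Rightarrow> 'v)) set" where
  "LF F r a =
     (if a = None then {Inr (\<lambda>_. undefined)}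
      else if a = Some bot then Inl ` F a
      else Inr ` plim {b. None < b \<and> b < a} F r)"

definition Lres :: "'a::complete_linorder option \<Rightarrow> 'a option \<Rightarrow> ('v + ('a option \<Rightarrow> 'v)) \<Rightarrow> ('v + ('a option \<Rightarrow> 'v))" where
  "Lres a b y =
     (if a = None then Inr (\<lambda>_. undefined)
      else if a = Some bot then (case y of Inl x \<Rightarrow> Inl x | Inr s \<Rightarrow> Inl (s (Some bot)))
      else (case y of Inl x \<Rightarrow> Inl x | Inr s \<Rightarrow> Inr (restrict s {c. None < c \<and> c < a})))"

definition presheaf_iso :: "('p::order \<Rightarrow> 'v set) \<Rightarrow> ('p \<Rightarrow> 'p \<Rightarrow> 'v \<Rightarrow> 'v) \<Rightarrow>
                            ('p \<Rightarrow> 'w set) \<Rightarrow> ('p \<Rightarrow> 'p \<Rightarrow> 'w \<Rightarrow> 'w) \<Rightarrow> ('p \<Rightarrow> 'v \<Rightarrow> 'w) \<Rightarrow> bool" where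
  "presheaf_iso F r G s \<phi> \<longleftrightarrow> (\<forall>a. bij_betw (\<phi> a) (F a) (G a)) \<and>
     (\<forall>a b x. a \<le> b \<and> x \<in> F b \<longrightarrow> \<phi> a (r a b x) = s a b (\<phi> b x))"

end

theory Submission
  imports Defs
begin

(* Since the restrictions of F into F(i) are injective, a compatible family over
   {b. 0 < b < a} is determined by its value at i; restricting to i thus embeds
   LF(a) into LF(i), and LF is again a presheaf of monomorphisms.

   In a chain, a covering sieve of a either contains a or is {c. c < a}.  By
   density, {b. 0 < b < a} is the union of the sets {b. 0 < b < c} with
   i < c < a, so a compatible family of sections of LF over the sieve is a
   coherent system of families over these sets, and these glue uniquely to a
   family over {b. 0 < b < a}.  The same gluing, over {b. 0 < b < a} itself,
   shows that the comparison map LF -> L(LF) is a natural bijection. *)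

lemma plimD:
  assumes "s \<in> plim I F r"
  shows "s \<in> extensional I" "b \<in> I \<Longrightarrow> s b \<in> F b"
    "b \<in> I \<Longrightarrow> c \<in> I \<Longrightarrow> c \<le> b \<Longrightarrow> r c b (s b) = s c"
  using assms unfolding plim_def by blast+

lemma plimI:
  "s \<in> extensional I \<Longrightarrow> (\<And>b. b \<in> I \<Longrightarrow> s b \<in> F b) \<Longrightarrow>
   (\<And>b c. b \<in> I \<Longrightarrow> c \<in> I \<Longrightarrow> c \<le> b \<Longrightarrow> r c b (s b) = s c) \<Longrightarrow> s \<in> plim I F r"
  unfolding plim_def by blast

lemma restrict_in_plim: "s \<in> plim I F r \<Longrightarrow> J \<subseteq> I \<Longrightarrow> restrict s J \<in> plim J F r"
  unfolding plim_def by auto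

lemma is_presheafD:
  assumes "is_presheaf F r"
  shows "a \<le> b \<Longrightarrow> x \<in> F b \<Longrightarrow> r a b x \<in> F a"
    "x \<in> F a \<Longrightarrow> r a a x = x"
    "a \<le> b \<Longrightarrow> b \<le> c \<Longrightarrow> x \<in> F c \<Longrightarrow> r a b (r b c x) = r a c x"
  using assms unfolding is_presheaf_def by blast+

lemma restrictions_in_plim:
  assumes "is_presheaf G \<rho>" "\<forall>c\<in>R. c \<le> a" "x \<in> G a"
  shows "(\<lambda>c\<in>R. \<rho> c a x) \<in> plim R G \<rho>"
  using assms is_presheafD[OF assms(1)] by (intro plimI) auto

lemma plim_eq_if_restrict_eq:
  assumes "s \<in> extensional I" "t \<in> extensional I" "\<And>b. b \<in> I \<Longrightarrow> \<exists>c\<in>C. b \<in> J c"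
    and "\<And>c. c \<in> C \<Longrightarrow> restrict s (J c) = restrict t (J c)"
  shows "s = t"
proof (rule extensionalityI[OF assms(1,2)])
  fix b assume "b \<in> I"
  with assms(3) obtain c where "c \<in> C" "b \<in> J c" by blast
  with assms(4)[of c] show "s b = t b" by (metis restrict_apply')
qed

lemma plim_amalgamation:
  assumes cover: "\<And>b. b \<in> I \<Longrightarrow> \<exists>c\<in>C. b \<in> J c"
    and sub: "\<And>c. c \<in> C \<Longrightarrow> J c \<subseteq> I"
    and down: "\<And>c b b'. c \<in> C \<Longrightarrow> b \<in> J c \<Longrightarrow> b' \<in> I \<Longrightarrow> b' \<le> b \<Longrightarrow> b' \<in> J c"
    and mem: "\<And>c. c \<in> C \<Longrightarrow> u c \<in> plim (J c) F r"
    and agree: "\<And>c c' b. c \<in> C \<Longrightarrow> c' \<in> C \<Longrightarrow> b \<in> J c \<Longrightarrow> b \<in> J c' \<Longrightarrow> u c b = u c' b"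
  obtains s where "s \<in> plim I F r" "\<And>c. c \<in> C \<Longrightarrow> restrict s (J c) = u c"
proof
  define s where "s = (\<lambda>b\<in>I. u (SOME c. c \<in> C \<and> b \<in> J c) b)"
  have s_eq: "s b = u c b" if "c \<in> C" "b \<in> J c" for b c
  proof -
    have "(SOME c. c \<in> C \<and> b \<in> J c) \<in> C \<and> b \<in> J (SOME c. c \<in> C \<and> b \<in> J c)"
      using someI_ex[of "\<lambda>c. c \<in> C \<and> b \<in> J c"] that by blast
    with that sub show ?thesis unfolding s_def by (auto intro: agree)
  qed
  show "s \<in> plim I F r"
  proof (rule plimI)
    show "s \<in> extensional I" unfolding s_def by simp
  next
    fix b assume "b \<in> I"
    with cover obtain c where "c \<in> C" "b \<in> J c" by blast
    then show "s b \<in> F b" using s_eq mem plimD(2) by metis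
  next
    fix b b' assume "b \<in> I" "b' \<in> I" "b' \<le> b"
    with cover obtain c where c: "c \<in> C" "b \<in> J c" by blast
    with down \<open>b' \<in> I\<close> \<open>b' \<le> b\<close> have "b' \<in> J c" by blast
    with c \<open>b' \<le> b\<close> show "r b' b (s b) = s b'" using s_eq mem plimD(3) by metis
  qed
  show "restrict s (J c) = u c" if "c \<in> C" for c
    by (rule extensionalityI[OF restrict_extensional plimD(1)[OF mem[OF that]]])
      (simp add: s_eq that)
qed

lemma inj_on_plim_eval_least:
  assumes "i \<in> I" "\<forall>b\<in>I. i \<le> b" "\<forall>b\<in>I. inj_on (r i b) (F b)"
  shows "inj_on (\<lambda>s. s i) (plim I F r)"
proof (rule inj_onI)
  fix s t assume s: "s \<in> plim I F r" and t: "t \<in> plim I F r" and st: "s i = t i"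
  show "s = t"
  proof (rule extensionalityI[OF plimD(1)[OF s] plimD(1)[OF t]])
    fix b assume "b \<in> I"
    with assms st have "r i b (s b) = r i b (t b)"
      by (simp add: plimD(3)[OF s] plimD(3)[OF t])
    with assms \<open>b \<in> I\<close> show "s b = t b"
      by (meson inj_onD plimD(2) s t)
  qed
qed

lemma bij_restrictions_if_mem_sieve:
  assumes G: "is_presheaf G \<rho>" and R: "is_sieve a R" "a \<in> R"
  shows "bij_betw (\<lambda>x. \<lambda>b\<in>R. \<rho> b a x) (G a) (plim R G \<rho>)"
proof (rule bij_betw_byWitness[where f' = "\<lambda>t. t a"])
  show "\<forall>x\<in>G a. (\<lambda>t. t a) ((\<lambda>b\<in>R. \<rho> b a x)) = x"
    using R(2) is_presheafD(2)[OF G] by simp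
  show "\<forall>t\<in>plim R G \<rho>. (\<lambda>b\<in>R. \<rho> b a (t a)) = t"
  proof
    fix t assume t: "t \<in> plim R G \<rho>"
    show "(\<lambda>b\<in>R. \<rho> b a (t a)) = t"
    proof (rule extensionalityI[OF restrict_extensional plimD(1)[OF t]])
      fix b assume "b \<in> R"
      with R(1) have "b \<le> a" unfolding is_sieve_def by blast
      with \<open>b \<in> R\<close> show "(\<lambda>b\<in>R. \<rho> b a (t a)) b = t b" using plimD(3)[OF t R(2)] by simp
    qed
  qed
  have "\<forall>c\<in>R. c \<le> a" using R(1) unfolding is_sieve_def by blast
  then show "(\<lambda>x. \<lambda>b\<in>R. \<rho> b a x) ` G a \<subseteq> plim R G \<rho>"
    using restrictions_in_plim[OF G] by blast
  show "(\<lambda>t. t a) ` plim R G \<rho> \<subseteq> G a" using plimD(2)[OF _ R(2)] by blast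
qed

lemma covering_sieve_eq_less:
  fixes R :: "'p::complete_linorder set"
  assumes R: "is_sieve a R" "Sup R = a" and "a \<notin> R"
  shows "R = {c. c < a}"
proof (intro equalityI subsetI)
  fix c assume "c \<in> R"
  with R(1) \<open>a \<notin> R\<close> show "c \<in> {c. c < a}"
    unfolding is_sieve_def by (metis mem_Collect_eq order_less_le)
next
  fix c assume "c \<in> {c. c < a}"
  with R(2) obtain d where "d \<in> R" "c < d" using less_Sup_iff[of c R] by auto
  with R(1) show "c \<in> R" unfolding is_sieve_def by (meson less_imp_le)
qed

abbreviation pos_below :: "'a::complete_linorder option \<Rightarrow> 'a option set" where
  "pos_below a \<equiv> {b. None < b \<and> b < a}"

lemma Some_bot_less_iff: "Some bot < a \<longleftrightarrow> a \<noteq> None \<and> a \<noteq> Some (bot::'a::complete_linorder)"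
  by (cases a) (auto simp: bot_less)

lemma Some_bot_le_iff: "Some (bot::'a::complete_linorder) \<le> a \<longleftrightarrow> None < a"
  by (cases a) simp_all

lemma Some_bot_less_imp_None_less: "Some (bot::'a::complete_linorder) < a \<Longrightarrow> None < a"
  by (cases a) simp_all

lemma pos_below_mono: "a \<le> b \<Longrightarrow> pos_below a \<subseteq> pos_below b"
  by auto

lemma LF_cases:
  obtains "a = None" | "a = Some bot" | "Some (bot::'a::complete_linorder) < a"
  using Some_bot_less_iff by blast

lemma LF_None [simp]: "LF F r None = {Inr (\<lambda>_. undefined)}"
  by (simp add: LF_def)

lemma LF_Some_bot [simp]: "LF F r (Some bot) = Inl ` F (Some bot)"
  by (simp add: LF_def)

lemma LF_above_bot [simp]: "Some bot < a \<Longrightarrow> LF F r a = Inr ` plim (pos_below a) F r"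
  by (simp add: LF_def Some_bot_less_iff del: not_None_eq)

lemma Lres_None [simp]: "Lres None b y = Inr (\<lambda>_. undefined)"
  by (simp add: Lres_def)

lemma Lres_Some_bot_Inl [simp]: "Lres (Some bot) b (Inl v) = Inl v"
  by (simp add: Lres_def)

lemma Lres_Some_bot_Inr [simp]: "Lres (Some bot) b (Inr s) = Inl (s (Some bot))"
  by (simp add: Lres_def)

lemma Lres_above_bot_Inr [simp]:
  "Some bot < a \<Longrightarrow> Lres a b (Inr s) = Inr (restrict s (pos_below a))"
  by (simp add: Lres_def Some_bot_less_iff del: not_None_eq)

lemma LF_aboveE:
  assumes "y \<in> LF F r a" "Some bot < a"
  obtains s where "y = Inr s" "s \<in> plim (pos_below a) F r"
  using assms by auto

lemma Lres_in_LF: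
  assumes "a \<le> b" "y \<in> LF F r b"
  shows "Lres a b y \<in> LF F r a"
proof (cases a rule: LF_cases)
  case 2
  then show ?thesis
  proof (cases b rule: LF_cases)
    case 3
    with assms obtain s where s: "y = Inr s" "s \<in> plim (pos_below b) F r" by (auto elim: LF_aboveE)
    have "s (Some bot) \<in> F (Some bot)" using plimD(2)[OF s(2), of "Some bot"] 3 by simp
    with s 2 show ?thesis by simp
  qed (use assms 2 in auto)
next
  case 3
  with assms obtain s where s: "y = Inr s" "s \<in> plim (pos_below b) F r"
    by (auto elim: LF_aboveE dest: less_le_trans)
  have "restrict s (pos_below a) \<in> plim (pos_below a) F r"
    using restrict_in_plim[OF s(2) pos_below_mono[OF assms(1)]] .
  with s 3 show ?thesis by simp
qed simp

lemma Lres_id: "y \<in> LF F r a \<Longrightarrow> Lres a a y = y"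
  by (cases a rule: LF_cases) (auto dest: plimD simp: extensional_restrict)

lemma Lres_comp:
  assumes "a \<le> b" "b \<le> c" "y \<in> LF F r c"
  shows "Lres a b (Lres b c y) = Lres a c y"
proof (cases a rule: LF_cases)
  case 2
  then show ?thesis
  proof (cases b rule: LF_cases)
    case 2
    with \<open>a = Some bot\<close> show ?thesis by (simp add: Lres_def split: sum.split)
  next
    case 3
    with assms obtain s where "y = Inr s" by (auto elim: LF_aboveE dest: less_le_trans)
    with 2 3 show ?thesis by (auto dest: less_le_trans[OF _ \<open>b \<le> c\<close>])
  qed (use assms 2 in auto)
next
  case 3
  with assms obtain s where "y = Inr s" by (auto elim: LF_aboveE dest: less_le_trans)
  moreover have "pos_below b \<inter> pos_below a = pos_below a"
    using \<open>a \<le> b\<close> by (auto intro: less_le_trans)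
  ultimately show ?thesis using assms 3 by (auto dest: less_le_trans)
qed simp

lemma LF_presheaf: "is_presheaf (LF F r) Lres"
  unfolding is_presheaf_def using Lres_in_LF Lres_id Lres_comp by blast

lemma inj_on_Lres_Some_bot:
  assumes "mono_presheaf F r" "a \<noteq> None"
  shows "inj_on (Lres (Some bot) a) (LF F r a)"
proof (cases a rule: LF_cases)
  case 3
  have "inj_on (\<lambda>s. s (Some bot)) (plim (pos_below a) F r)"
  proof (rule inj_on_plim_eval_least)
    show "\<forall>b\<in>pos_below a. inj_on (r (Some bot) b) (F b)"
      using assms(1) unfolding mono_presheaf_def by (auto dest!: less_option_None_is_Some)
  qed (use 3 in \<open>auto simp: Some_bot_le_iff\<close>)
  with 3 show ?thesis unfolding inj_on_def by auto
next
  case 2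
  then show ?thesis unfolding inj_on_def by auto
qed (use assms in simp)

lemma LF_mono_presheaf:
  assumes "mono_presheaf F r"
  shows "mono_presheaf (LF F r) Lres"
  unfolding mono_presheaf_def
proof (intro conjI allI impI)
  fix a b :: 'a assume "a \<le> b"
  have "(Lres (Some bot) (Some a) \<circ> Lres (Some a) (Some b)) y = Lres (Some bot) (Some b) y"
    if "y \<in> LF F r (Some b)" for y
    using Lres_comp[OF _ _ that] \<open>a \<le> b\<close> by simp
  then have "inj_on (Lres (Some bot) (Some a) \<circ> Lres (Some a) (Some b)) (LF F r (Some b))"
    using inj_on_Lres_Some_bot[OF assms] inj_on_cong by (metis option.distinct(1))
  then show "inj_on (Lres (Some a) (Some b)) (LF F r (Some b))"
    by (rule inj_on_imageI2)
qed (simp_all add: LF_presheaf)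

lemma dense_pos_below_cover:
  assumes dense: "\<forall>x y::'a::complete_linorder. x < y \<longrightarrow> (\<exists>z. x < z \<and> z < y)"
    and "b \<in> pos_below (a::'a option)"
  obtains c where "c \<in> pos_below a" "Some bot < c" "b \<in> pos_below c"
proof -
  from assms(2) obtain x y where "b = Some x" "a = Some y" "x < y"
    by (cases a; cases b) auto
  with dense obtain z where "x < z" "z < y" by blast
  then show ?thesis
    using that[of "Some z"] \<open>b = Some x\<close> \<open>a = Some y\<close> le_less_trans[OF bot_least \<open>x < z\<close>] by simp
qed

lemma inj_on_Lres_family:
  assumes dense: "\<forall>x y::'a::complete_linorder. x < y \<longrightarrow> (\<exists>z. x < z \<and> z < y)"
    and a: "Some bot < (a::'a option)" and R: "pos_below a \<subseteq> R"
  shows "inj_on (\<lambda>x. \<lambda>b\<in>R. Lres b a x) (LF F r a)"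
proof (rule inj_onI)
  fix x y assume x: "x \<in> LF F r a" and y: "y \<in> LF F r a"
    and eq: "(\<lambda>b\<in>R. Lres b a x) = (\<lambda>b\<in>R. Lres b a y)"
  from x a obtain s where s: "x = Inr s" "s \<in> plim (pos_below a) F r" by (rule LF_aboveE)
  from y a obtain t where t: "y = Inr t" "t \<in> plim (pos_below a) F r" by (rule LF_aboveE)
  have "s = t"
  proof (rule plim_eq_if_restrict_eq[OF plimD(1)[OF s(2)] plimD(1)[OF t(2)]])
    show "\<exists>c\<in>{c \<in> pos_below a. Some bot < c}. b \<in> pos_below c" if "b \<in> pos_below a" for b
      using dense_pos_below_cover[OF dense that] by blast
  next
    fix c assume c: "c \<in> {c \<in> pos_below a. Some bot < c}"
    with R have "Lres c a x = Lres c a y" using fun_cong[OF eq, of c] by auto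
    with c s t show "restrict s (pos_below c) = restrict t (pos_below c)" by simp
  qed
  with s t show "x = y" by simp
qed

lemma amalgamate_LF_family:
  assumes dense: "\<forall>x y::'a::complete_linorder. x < y \<longrightarrow> (\<exists>z. x < z \<and> z < y)"
    and R: "pos_below (a::'a option) \<subseteq> R" and t: "t \<in> plim R (LF F r) Lres"
  obtains s where "s \<in> plim (pos_below a) F r"
    "\<And>c. c \<in> pos_below a \<Longrightarrow> Some bot < c \<Longrightarrow> t c = Inr (restrict s (pos_below c))"
proof -
  define C where "C = {c \<in> pos_below a. Some bot < c}"
  have C_R: "C \<subseteq> R" using R unfolding C_def by auto
  have tC: "Inr (projr (t c)) = t c \<and> projr (t c) \<in> plim (pos_below c) F r" if "c \<in> C" for c
  proof -
    have "t c \<in> Inr ` plim (pos_below c) F r"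
      using plimD(2)[OF t, of c] that C_R unfolding C_def by auto
    then show ?thesis by auto
  qed
  have t_restrict: "projr (t c) = restrict (projr (t c')) (pos_below c)"
    if "c \<in> C" "c' \<in> C" "c \<le> c'" for c c'
  proof -
    have "c \<in> R" "c' \<in> R" using that(1,2) C_R by auto
    then have "t c = Lres c c' (t c')" using plimD(3)[OF t _ _ that(3)] by simp
    also have "\<dots> = Lres c c' (Inr (projr (t c')))" using tC[OF that(2)] by simp
    also have "\<dots> = Inr (restrict (projr (t c')) (pos_below c))"
      using that(1) unfolding C_def by simp
    finally show ?thesis by simp
  qed
  obtain s where s: "s \<in> plim (pos_below a) F r"
    and s_restrict: "\<And>c. c \<in> C \<Longrightarrow> restrict s (pos_below c) = projr (t c)"
  proof (rule plim_amalgamation[of "pos_below a" C pos_below "\<lambda>c. projr (t c)"])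
    show "\<exists>c\<in>C. b \<in> pos_below c" if "b \<in> pos_below a" for b
      using dense_pos_below_cover[OF dense that] unfolding C_def by blast
    show "projr (t c) b = projr (t c') b"
      if "c \<in> C" "c' \<in> C" "b \<in> pos_below c" "b \<in> pos_below c'" for c c' b
    proof (cases "c \<le> c'")
      case True
      then show ?thesis using t_restrict[of c c'] that by simp
    next
      case False
      then show ?thesis using t_restrict[of c' c] that by simp
    qed
  qed (use tC in \<open>auto simp: C_def intro: le_less_trans\<close>)
  show ?thesis
  proof (rule that[OF s])
    fix c assume "c \<in> pos_below a" "Some bot < c"
    then have "c \<in> C" unfolding C_def by simp
    then show "t c = Inr (restrict s (pos_below c))" using tC s_restrict by simp
  qed
qed

lemma Lres_family_surj:
  assumes dense: "\<forall>x y::'a::complete_linorder. x < y \<longrightarrow> (\<exists>z. x < z \<and> z < y)"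
    and a: "Some bot < (a::'a option)" and R: "pos_below a \<subseteq> R" "R \<subseteq> {c. c < a}"
    and t: "t \<in> plim R (LF F r) Lres"
  shows "t \<in> (\<lambda>x. \<lambda>b\<in>R. Lres b a x) ` LF F r a"
proof -
  obtain s where s: "s \<in> plim (pos_below a) F r"
    and t_eq: "\<And>c. c \<in> pos_below a \<Longrightarrow> Some bot < c \<Longrightarrow> t c = Inr (restrict s (pos_below c))"
    using amalgamate_LF_family[OF dense R(1) t] by blast
  have "(\<lambda>b\<in>R. Lres b a (Inr s)) = t"
  proof (rule extensionalityI[OF restrict_extensional plimD(1)[OF t]])
    fix c assume "c \<in> R"
    then have "c < a" using R(2) by blast
    show "(\<lambda>b\<in>R. Lres b a (Inr s)) c = t c"
    proof (cases c rule: LF_cases)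
      case 1
      then show ?thesis using plimD(2)[OF t \<open>c \<in> R\<close>] \<open>c \<in> R\<close> by simp
    next
      case 2
      with a have "c \<in> pos_below a" by simp
      then obtain c' where c': "c' \<in> pos_below a" "Some bot < c'" "c \<in> pos_below c'"
        by (rule dense_pos_below_cover[OF dense])
      then have "c' \<in> R" "c \<le> c'" using R(1) by auto
      then have "t c = Lres c c' (t c')" using plimD(3)[OF t _ \<open>c \<in> R\<close>] by simp
      also have "\<dots> = Lres c a (Inr s)" using t_eq[OF c'(1,2)] c'(3) 2 by simp
      finally show ?thesis using \<open>c \<in> R\<close> by simp
    next
      case 3
      with \<open>c < a\<close> have "c \<in> pos_below a" by (auto intro: Some_bot_less_imp_None_less)
      then show ?thesis using t_eq 3 \<open>c \<in> R\<close> by simp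
    qed
  qed
  moreover have "Inr s \<in> LF F r a" using s a by simp
  ultimately show ?thesis by blast
qed

lemma bij_Lres_family:
  assumes dense: "\<forall>x y::'a::complete_linorder. x < y \<longrightarrow> (\<exists>z. x < z \<and> z < y)"
    and a: "Some bot < (a::'a option)" and R: "pos_below a \<subseteq> R" "R \<subseteq> {c. c < a}"
  shows "bij_betw (\<lambda>x. \<lambda>b\<in>R. Lres b a x) (LF F r a) (plim R (LF F r) Lres)"
  unfolding bij_betw_def
proof (intro conjI equalityI)
  show "inj_on (\<lambda>x. \<lambda>b\<in>R. Lres b a x) (LF F r a)"
    by (rule inj_on_Lres_family[OF dense a R(1)])
  have "\<forall>c\<in>R. c \<le> a" using R(2) by auto
  then show "(\<lambda>x. \<lambda>b\<in>R. Lres b a x) ` LF F r a \<subseteq> plim R (LF F r) Lres"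
    using restrictions_in_plim[OF LF_presheaf] by blast
  show "plim R (LF F r) Lres \<subseteq> (\<lambda>x. \<lambda>b\<in>R. Lres b a x) ` LF F r a"
    using Lres_family_surj[OF dense a R] by blast
qed

lemma LF_sheaf:
  assumes dense: "\<forall>x y::'a::complete_linorder. x < y \<longrightarrow> (\<exists>z. x < z \<and> z < y)"
  shows "is_sheaf (LF F r) (Lres :: 'a option \<Rightarrow> _)"
  unfolding is_sheaf_def
proof (intro conjI allI impI)
  fix a :: "'a option" and R assume R: "is_sieve a R \<and> Sup R = a"
  show "bij_betw (\<lambda>x. \<lambda>b\<in>R. Lres b a x) (LF F r a) (plim R (LF F r) Lres)"
  proof (cases "a \<in> R")
    case True
    with R show ?thesis using bij_restrictions_if_mem_sieve[OF LF_presheaf] by blast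
  next
    case False
    with R have R_eq: "R = {c. c < a}" using covering_sieve_eq_less by blast
    show ?thesis
    proof (cases a rule: LF_cases)
      case 1
      with R_eq have "R = {}" by simp
      then show ?thesis using 1 by (simp add: plim_def bij_betw_def restrict_def)
    next
      case 2 \<comment> \<open>impossible: the join of {0} is 0, not i\<close>
      with R_eq have "R = {None}" by (auto simp: less_option_def split: option.splits)
      with R 2 show ?thesis by simp
    next
      case 3
      have "pos_below a \<subseteq> {c. c < a}" by blast
      with R_eq show ?thesis using bij_Lres_family[OF dense 3] by blast
    qed
  qed
qed (rule LF_presheaf)

definition LF_to_LLF :: "'a::complete_linorder option \<Rightarrow> ('v + ('a option \<Rightarrow> 'v)) \<Rightarrow>
    ('v + ('a option \<Rightarrow> 'v)) + ('a option \<Rightarrow> 'v + ('a option \<Rightarrow> 'v))" where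
  "LF_to_LLF a x =
     (if a = None then Inr (\<lambda>_. undefined) else if a = Some bot then Inl x
      else Inr (\<lambda>b\<in>pos_below a. Lres b a x))"

lemma LF_to_LLF_None [simp]: "LF_to_LLF None x = Inr (\<lambda>_. undefined)"
  by (simp add: LF_to_LLF_def)

lemma LF_to_LLF_Some_bot [simp]: "LF_to_LLF (Some bot) x = Inl x"
  by (simp add: LF_to_LLF_def)

lemma LF_to_LLF_above_bot [simp]:
  "Some bot < a \<Longrightarrow> LF_to_LLF a x = Inr (\<lambda>b\<in>pos_below a. Lres b a x)"
  by (simp add: LF_to_LLF_def Some_bot_less_iff del: not_None_eq)

lemma bij_LF_to_LLF:
  fixes F :: "'a::complete_linorder option \<Rightarrow> 'v set"
  assumes dense: "\<forall>x y::'a::complete_linorder. x < y \<longrightarrow> (\<exists>z. x < z \<and> z < y)"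
  shows "bij_betw (LF_to_LLF a) (LF F r a) (LF (LF F r) Lres (a::'a option))"
proof (cases a rule: LF_cases)
  case 1
  then show ?thesis by (simp add: bij_betw_def)
next
  case 2
  then have "LF_to_LLF a = (Inl :: 'v + ('a option \<Rightarrow> 'v) \<Rightarrow> _)" by (simp add: fun_eq_iff)
  then have "bij_betw (LF_to_LLF a) (LF F r a) (Inl ` LF F r a)" by (simp add: bij_betw_def)
  moreover have "LF (LF F r) Lres a = Inl ` LF F r a"
    using 2 by (rule ssubst) (rule LF_Some_bot)
  ultimately show ?thesis by (simp only:)
next
  case 3
  have "bij_betw (\<lambda>x. \<lambda>b\<in>pos_below a. Lres b a x) (LF F r a) (plim (pos_below a) (LF F r) Lres)"
    by (rule bij_Lres_family[OF dense 3]) auto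
  then have "bij_betw (\<lambda>x. Inr (\<lambda>b\<in>pos_below a. Lres b a x)) (LF F r a)
      (Inr ` plim (pos_below a) (LF F r) Lres)"
    by (rule bij_betw_trans[of _ _ _ Inr, unfolded comp_def]) (simp add: bij_betw_def)
  moreover have "LF_to_LLF a = (\<lambda>x :: 'v + ('a option \<Rightarrow> 'v). Inr (\<lambda>b\<in>pos_below a. Lres b a x))"
    using 3 by (simp add: fun_eq_iff)
  moreover have "LF (LF F r) Lres a = Inr ` plim (pos_below a) (LF F r) Lres"
    using 3 by (rule LF_above_bot)
  ultimately show ?thesis by (simp only:)
qed

lemma LF_to_LLF_natural:
  assumes "a \<le> b" "x \<in> LF F r b"
  shows "LF_to_LLF a (Lres a b x) = Lres a b (LF_to_LLF b x)"
proof (cases a rule: LF_cases)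
  case 2
  show ?thesis
  proof (cases b rule: LF_cases)
    case 3
    with assms obtain s where "x = Inr s" by (auto elim: LF_aboveE)
    with 2 3 show ?thesis by simp
  qed (use assms 2 in auto)
next
  case 3
  then have b: "Some bot < b" using assms(1) by (rule less_le_trans)
  have "(\<lambda>c\<in>pos_below a. Lres c a (Lres a b x)) = restrict (\<lambda>c\<in>pos_below b. Lres c b x) (pos_below a)"
    using pos_below_mono[OF assms(1)] Lres_comp[OF _ assms] by (auto simp: fun_eq_iff)
  with 3 b show ?thesis by simp
qed simp

theorem lemma22:
  fixes F :: "'a::complete_linorder option \<Rightarrow> 'v set"
    and r :: "'a option \<Rightarrow> 'a option \<Rightarrow> 'v \<Rightarrow> 'v"
  assumes dense: "\<forall>x y::'a. x < y \<longrightarrow> (\<exists>z. x < z \<and> z < y)"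
    and mono: "mono_presheaf F r"
  shows "mono_sheaf (LF F r) Lres \<and>
         (\<exists>\<phi>. presheaf_iso (LF F r) Lres (LF (LF F r) Lres) Lres \<phi>)"
proof
  show "mono_sheaf (LF F r) Lres"
    unfolding mono_sheaf_def using LF_sheaf[OF dense] LF_mono_presheaf[OF mono] by blast
  have "presheaf_iso (LF F r) Lres (LF (LF F r) Lres) Lres LF_to_LLF"
    unfolding presheaf_iso_def using bij_LF_to_LLF[OF dense] LF_to_LLF_natural by blast
  then show "\<exists>\<phi>. presheaf_iso (LF F r) Lres (LF (LF F r) Lres) Lres \<phi>" by blast
qed

end
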